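(* For an integer $x\ge3$ and an odd prime $p$, the following are equivalent: (1) $p$ divides $x$; (2) $\mathcal{F}_{\{1,x\}}\subseteq\mathcal{F}_{\{1,p,2p\}}$ and $\mathcal{F}_{\{2,x\}}\subseteq\mathcal{F}_{\{2,p,2p\}}$.
   Context: $\mathbb{N}=\{1,2,\dots\}$, $\mathbb{N}_0=\{0\}\cup\mathbb{N}$. The Kirch topology $\tau_K$ on $\mathbb{N}$ is generated by the base of all $a+b\mathbb{N}_0=\{a+bn:n\in\mathbb{N}_0\}$ with $a,b\in\mathbb{N}$ coprime and $b$ square-free. Closures $\overline{U}$ are in $\tau_K$; $\tau_y=\{U\in\tau_K:y\in U\}$. For finite $E\subseteq\mathbb{N}$, $\mathcal{F}_E=\{B\subseteq\mathbb{N}:\exists (U_y)_{y\in E}\in\prod_{y\in E}\tau_y\ (\bigcap_{y\in E}\overline{U_y}\subseteq B)\}$. *)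

theory Defs
  imports "HOL-Analysis.Analysis" "HOL-Computational_Algebra.Squarefree"
begin

text \<open>Positive integers are modelled as the nat set {1..} = {n. n \<ge> 1}.
  Basic Kirch sets a + b N0 with a, b positive, coprime, b square-free.\<close>

definition kirch_basic :: "nat set \<Rightarrow> bool" where
  "kirch_basic B \<longleftrightarrow> (\<exists>a b. a \<ge> 1 \<and> b \<ge> 1 \<and> coprime a b \<and> squarefree b
       \<and> B = {a + b * n | n. True})"

definition kirch_open :: "nat set \<Rightarrow> bool" where
  "kirch_open U \<longleftrightarrow> U \<subseteq> {1..} \<and> (\<forall>x\<in>U. \<exists>B. kirch_basic B \<and> x \<in> B \<and> B \<subseteq> U)"

lemma kirch_basic_sub: "kirch_basic B \<Longrightarrow> B \<subseteq> {1..}"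
  unfolding kirch_basic_def by auto

lemma squarefree_lcm_nat:
  assumes "squarefree (a::nat)" "squarefree b"
  shows "squarefree (lcm a b)"
proof -
  have a0: "a \<noteq> 0" and b0: "b \<noteq> 0" using assms not_squarefree_0 by metis+
  have "lcm a b \<noteq> 0" using a0 b0 by simp
  moreover have "\<forall>p. prime p \<longrightarrow> multiplicity p (lcm a b) \<le> 1"
    using assms a0 b0 by (simp add: multiplicity_lcm squarefree_factorial_semiring'')
  ultimately show ?thesis by (simp add: squarefree_factorial_semiring'')
qed

lemma istopology_kirch: "istopology kirch_open"
  unfolding istopology_def
proof (intro conjI allI impI)
  fix S T assume S: "kirch_open S" and T: "kirch_open T"
  show "kirch_open (S \<inter> T)"
    unfolding kirch_open_def
  proof (intro conjI ballI)
    show "S \<inter> T \<subseteq> {1..}" using S unfolding kirch_open_def by auto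
  next
    fix x assume x: "x \<in> S \<inter> T"
    obtain B1 where B1: "kirch_basic B1" "x \<in> B1" "B1 \<subseteq> S"
      using S x unfolding kirch_open_def by blast
    obtain B2 where B2: "kirch_basic B2" "x \<in> B2" "B2 \<subseteq> T"
      using T x unfolding kirch_open_def by blast
    obtain a1 b1 n1 where a1: "a1 \<ge> 1" "b1 \<ge> 1" "coprime a1 b1" "squarefree b1"
      "B1 = {a1 + b1 * n | n. True}" "x = a1 + b1 * n1"
      using B1 unfolding kirch_basic_def by blast
    obtain a2 b2 n2 where a2: "a2 \<ge> 1" "b2 \<ge> 1" "coprime a2 b2" "squarefree b2"
      "B2 = {a2 + b2 * n | n. True}" "x = a2 + b2 * n2"
      using B2 unfolding kirch_basic_def by blast
    \<comment> \<open>{x + lcm b1 b2 * n} is contained in both; lcm of square-free is square-free\<close>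
    define b where "b = lcm b1 b2"
    have xpos: "x \<ge> 1" using a1 by simp
    have cx1: "coprime x b1" using a1 gcd_add_mult[of b1 n1 a1]
      by (simp add: coprime_iff_gcd_eq_1 gcd.commute algebra_simps)
    have cx2: "coprime x b2" using a2 gcd_add_mult[of b2 n2 a2]
      by (simp add: coprime_iff_gcd_eq_1 gcd.commute algebra_simps)
    have cb: "coprime x b"
    proof -
      have c: "coprime x (b1 * b2)" using cx1 cx2 by simp
      have d: "lcm b1 b2 dvd b1 * b2" by (simp add: lcm_least)
      show ?thesis unfolding b_def by (rule coprime_divisors[OF dvd_refl d c])
    qed
    have bpos: "b \<ge> 1" unfolding b_def using a1 a2
      by (simp add: Suc_le_eq lcm_pos_nat)
    have sqf: "squarefree b" unfolding b_def by (rule squarefree_lcm_nat[OF a1(4) a2(4)])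
    let ?B = "{x + b * n | n. True}"
    have "kirch_basic ?B" unfolding kirch_basic_def using xpos bpos cb sqf by blast
    moreover have "x \<in> ?B" by force
    moreover have "?B \<subseteq> B1"
    proof
      fix y assume "y \<in> ?B"
      then obtain n where y: "y = x + b * n" by blast
      obtain k where k: "b = b1 * k" unfolding b_def by (meson dvd_lcm1 dvdE)
      have "y = a1 + b1 * (n1 + k * n)" using y k a1(6) by (simp add: algebra_simps)
      thus "y \<in> B1" using a1(5) by blast
    qed
    moreover have "?B \<subseteq> B2"
    proof
      fix y assume "y \<in> ?B"
      then obtain n where y: "y = x + b * n" by blast
      obtain k where k: "b = b2 * k" unfolding b_def by (meson dvd_lcm2 dvdE)
      have "y = a2 + b2 * (n2 + k * n)" using y k a2(6) by (simp add: algebra_simps)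
      thus "y \<in> B2" using a2(5) by blast
    qed
    ultimately show "\<exists>B. kirch_basic B \<and> x \<in> B \<and> B \<subseteq> S \<inter> T"
      using B1 B2 by blast
  qed
next
  fix K assume K: "\<forall>S\<in>K. kirch_open S"
  show "kirch_open (\<Union>K)" unfolding kirch_open_def
  proof (intro conjI ballI)
    show "\<Union>K \<subseteq> {1..}" using K unfolding kirch_open_def by blast
  next
    fix x assume "x \<in> \<Union>K"
    then obtain S where S: "S \<in> K" "x \<in> S" by blast
    then have "kirch_open S" using K by blast
    then obtain B where B: "kirch_basic B" "x \<in> B" "B \<subseteq> S"
      using S(2) unfolding kirch_open_def by blast
    have "B \<subseteq> \<Union>K" using B(3) S(1) by blast
    then show "\<exists>B. kirch_basic B \<and> x \<in> B \<and> B \<subseteq> \<Union>K"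
      using B by blast
  qed
qed

definition kirch :: "nat topology" where
  "kirch = topology kirch_open"

lemma openin_kirch: "openin kirch U \<longleftrightarrow> kirch_open U"
  unfolding kirch_def using istopology_kirch by (simp add: topology_inverse')

definition kirch_nbhds :: "nat \<Rightarrow> nat set set" where
  "kirch_nbhds y = {U. openin kirch U \<and> y \<in> U}"

definition kirchF :: "nat set \<Rightarrow> nat set set" where
  "kirchF E = {B. B \<subseteq> {1..} \<and>
     (\<exists>U. (\<forall>y\<in>E. U y \<in> kirch_nbhds y) \<and> (\<Inter>y\<in>E. kirch closure_of (U y)) \<subseteq> B)}"

end

theory Submission
  imports Defs "HOL-Number_Theory.Residues"
begin

text \<open>
  The closure of a basic set \<open>a + b\<nat>\<^sub>0\<close> (\<open>b > 0\<close>) consists of the positive \<open>m\<close> such that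
  every prime \<open>q\<close> dividing \<open>b\<close> divides \<open>m\<close> or satisfies \<open>m \<equiv> a (mod q)\<close>.

  If \<open>p\<close> divides \<open>x\<close>, a basic neighbourhood \<open>x + b\<nat>\<^sub>0\<close> of \<open>x\<close> is recovered, up to closure,
  from the neighbourhoods \<open>p + s\<nat>\<^sub>0\<close> and \<open>2p + s\<nat>\<^sub>0\<close>, where \<open>s\<close> is the odd part of \<open>b\<close>.
  For a point \<open>m\<close> of both closures, the prime \<open>2\<close>, if it divides \<open>b\<close>, imposes no condition
  since then \<open>x\<close> is odd, and an odd prime dividing \<open>s\<close> but not \<open>m\<close> would divide
  \<open>2p - p = p\<close>, hence \<open>x\<close>, although \<open>x\<close> and \<open>b\<close> are coprime.

  Conversely, the closures of arbitrary neighbourhoods of \<open>y\<close>, \<open>p\<close> and \<open>2p\<close> always share a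
  point \<open>m \<equiv> y (mod p)\<close> prime to \<open>p\<close>, while every point of the closure of \<open>x + p\<nat>\<^sub>0\<close> that is
  prime to \<open>p\<close> is congruent to \<open>x\<close>. Both inclusions would thus give \<open>x \<equiv> 1 \<equiv> 2 (mod p)\<close>.
\<close>

lemma squarefree_dvdI:
  fixes g k :: "'a :: factorial_semiring"
  assumes "squarefree g" and "\<And>q. prime q \<Longrightarrow> q dvd g \<Longrightarrow> q dvd k"
  shows "g dvd k"
proof (cases "k = 0")
  case False
  have "g \<noteq> 0"
    using assms(1) by auto
  then show ?thesis
  proof (rule multiplicity_le_imp_dvd)
    fix q :: 'a assume q: "prime q"
    have "multiplicity q g \<le> 1"
      using assms(1) \<open>g \<noteq> 0\<close> q squarefree_factorial_semiring'' by blast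
    moreover have "0 < multiplicity q k" if "0 < multiplicity q g"
      using that q assms(2) \<open>g \<noteq> 0\<close> False by (simp add: prime_multiplicity_gt_zero_iff)
    ultimately show "multiplicity q g \<le> multiplicity q k"
      by linarith
  qed
qed simp

lemma squarefree_congI:
  fixes g a b :: nat
  assumes "squarefree g" and "\<And>q. prime q \<Longrightarrow> q dvd g \<Longrightarrow> [a = b] (mod q)"
  shows "[a = b] (mod g)"
  using assms unfolding cong_altdef_nat' by (rule squarefree_dvdI)

lemma progressions_intersect:
  fixes a b c d :: nat
  assumes "0 < b" "0 < d" "[a = c] (mod gcd b d)"
  shows "\<exists>s t. a + b * s = c + d * t"
proof -
  obtain k where k: "int c = int a + int (gcd b d) * k"
    using assms(3) unfolding cong_int_iff[symmetric] cong_iff_lin by blast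
  obtain u v where uv: "u * int b + v * int d = int (gcd b d)"
    using bezout_int[of "int b" "int d"] by auto
  define K where "K = \<bar>u * k\<bar> + \<bar>v * k\<bar>"
  define s where "s = u * k + int d * K"
  define t where "t = int b * K - v * k"
  have "0 \<le> K"
    by (simp add: K_def)
  then have "K \<le> int d * K" "K \<le> int b * K"
    using assms(1,2) by (simp_all add: mult_le_cancel_right1)
  then have "0 \<le> s" "0 \<le> t"
    unfolding s_def t_def K_def by linarith+
  moreover have "int a + int b * s = int c + int d * t"
    unfolding s_def t_def k uv[symmetric] by (simp add: algebra_simps)
  ultimately have "a + b * nat s = c + d * nat t"
    by (metis int_ops(7) nat_0_le nat_int_add)
  then show ?thesis
    by blast
qed

definition progression :: "nat \<Rightarrow> nat \<Rightarrow> nat set" where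
  "progression a b = {a + b * n | n. True}"

lemma mem_progression: "z \<in> progression a b \<longleftrightarrow> (\<exists>n. z = a + b * n)"
  by (auto simp: progression_def)

lemma start_mem_progression: "a \<in> progression a b"
  unfolding mem_progression by (metis add_0_right mult_0_right)

lemma progression_in_kirch_nbhds:
  assumes "0 < a" "0 < b" "coprime a b" "squarefree b"
  shows "progression a b \<in> kirch_nbhds a"
proof -
  have "kirch_basic (progression a b)"
    unfolding kirch_basic_def progression_def using assms by (intro exI[of _ a] exI[of _ b]) auto
  then show ?thesis
    using kirch_basic_sub start_mem_progression
    unfolding kirch_nbhds_def openin_kirch kirch_open_def by blast
qed

lemma topspace_kirch: "topspace kirch = {1..}"
proof
  show "topspace kirch \<subseteq> {1..}"
    unfolding topspace_def openin_kirch kirch_open_def by blast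
  have "progression 1 1 = {1..}"
    unfolding mem_progression set_eq_iff by (metis add.commute atLeast_iff le_add1 le_add_diff_inverse2 mult_1)
  then show "{1..} \<subseteq> topspace kirch"
    using progression_in_kirch_nbhds[of 1 1] openin_subset unfolding kirch_nbhds_def by force
qed

lemma kirch_nbhdsE:
  assumes "U \<in> kirch_nbhds a"
  obtains b where "0 < a" "0 < b" "squarefree b" "coprime a b" "progression a b \<subseteq> U"
proof -
  obtain B where B: "kirch_basic B" "a \<in> B" "B \<subseteq> U"
    using assms unfolding kirch_nbhds_def openin_kirch kirch_open_def by blast
  then obtain a0 b n0 where "0 < a0" "0 < b" "coprime a0 b" "squarefree b"
      "B = progression a0 b" "a = a0 + b * n0"
    unfolding kirch_basic_def progression_def by (auto simp flip: Suc_le_eq)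
  moreover from this have "coprime a b"
    by (metis gcd_add_mult coprime_iff_gcd_eq_1 gcd.commute add.commute mult.commute)
  moreover have "progression a b \<subseteq> B"
    unfolding \<open>B = progression a0 b\<close> mem_progression \<open>a = a0 + b * n0\<close> subset_iff
    by (metis add.assoc distrib_left)
  ultimately show ?thesis
    using that B by simp
qed

lemma closure_of_progression:
  assumes "0 < b"
  shows "m \<in> kirch closure_of progression a b \<longleftrightarrow>
    0 < m \<and> (\<forall>q. prime q \<longrightarrow> q dvd b \<longrightarrow> q dvd m \<or> [m = a] (mod q))"
proof
  assume m: "m \<in> kirch closure_of progression a b"
  then have "0 < m"
    using closure_of_subset_topspace topspace_kirch by fastforce
  moreover have "[m = a] (mod q)" if q: "prime q" "q dvd b" "\<not> q dvd m" for q
  proof -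
    have "progression m q \<in> kirch_nbhds m"
      using \<open>0 < m\<close> q prime_imp_coprime[of q m]
      by (intro progression_in_kirch_nbhds) (auto simp: prime_gt_0_nat squarefree_prime coprime_commute)
    then have "\<exists>z. z \<in> progression a b \<and> z \<in> progression m q"
      using m unfolding in_closure_of kirch_nbhds_def by blast
    then obtain s t where "a + b * s = m + q * t"
      unfolding mem_progression by blast
    moreover obtain b' where "b = q * b'"
      using q(2) by blast
    ultimately have "a + (b' * s) * q = m + t * q"
      by (simp add: algebra_simps)
    then show ?thesis
      unfolding cong_iff_lin_nat by blast
  qed
  ultimately show "0 < m \<and> (\<forall>q. prime q \<longrightarrow> q dvd b \<longrightarrow> q dvd m \<or> [m = a] (mod q))"
    by blast
next
  assume m: "0 < m \<and> (\<forall>q. prime q \<longrightarrow> q dvd b \<longrightarrow> q dvd m \<or> [m = a] (mod q))"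
  show "m \<in> kirch closure_of progression a b"
    unfolding in_closure_of
  proof (intro conjI allI impI)
    show "m \<in> topspace kirch"
      using m topspace_kirch by simp
    fix T assume "m \<in> T \<and> openin kirch T"
    then have "T \<in> kirch_nbhds m"
      by (simp add: kirch_nbhds_def)
    then obtain c where c: "0 < c" "squarefree c" "coprime m c" "progression m c \<subseteq> T"
      by (elim kirch_nbhdsE) blast
    have "[m = a] (mod gcd b c)"
    proof (rule squarefree_congI)
      show "squarefree (gcd b c)"
        using c(2) squarefree_mono by (metis gcd_dvd2)
      fix q assume q: "prime q" "q dvd gcd b c"
      then have "\<not> q dvd m"
        using c(3) coprime_common_divisor not_prime_unit by auto
      then show "[m = a] (mod q)"
        using m q by auto
    qed
    then obtain s t where st: "a + b * s = m + c * t"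
      using progressions_intersect[OF assms c(1)] cong_sym by blast
    have "a + b * s \<in> progression a b" "a + b * s \<in> progression m c"
      unfolding mem_progression by (metis st)+
    then show "\<exists>z. z \<in> progression a b \<and> z \<in> T"
      using c(4) by blast
  qed
qed

lemma closure_of_progression_odd_part_inter_subset:
  fixes p x b s :: nat
  assumes "b = 2 ^ k * s" "0 < b" "coprime x b" "p dvd x"
  shows "kirch closure_of progression p s \<inter> kirch closure_of progression (2 * p) s
    \<subseteq> kirch closure_of progression x b"
proof
  fix m assume m: "m \<in> kirch closure_of progression p s \<inter> kirch closure_of progression (2 * p) s"
  have "0 < s"
    using assms(1,2) by simp
  moreover have "m \<in> kirch closure_of progression p s" "m \<in> kirch closure_of progression (2 * p) s"
    using m by simp_all
  ultimately have "0 < m"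
    and m_p: "\<And>q. prime q \<Longrightarrow> q dvd s \<Longrightarrow> q dvd m \<or> [m = p] (mod q)"
    and m_2p: "\<And>q. prime q \<Longrightarrow> q dvd s \<Longrightarrow> q dvd m \<or> [m = 2 * p] (mod q)"
    by (simp_all add: closure_of_progression)
  have "q dvd m \<or> [m = x] (mod q)" if q: "prime q" "q dvd b" for q
  proof (cases "q = 2")
    case True
    then have "odd x"
      using q(2) assms(3) coprime_common_divisor by fastforce
    then show ?thesis
      using True by (cases "even m") (auto simp: cong_def odd_iff_mod_2_eq_one)
  next
    case False
    then have "q dvd s"
      using q assms(1) by (meson prime_dvd_mult_iff prime_dvd_power_nat primes_dvd_imp_eq two_is_prime_nat)
    have "\<not> q dvd p"
      using q assms(3,4) by (meson dvd_trans not_coprimeI prime_def prime_elem_not_unit)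
    show ?thesis
    proof (rule ccontr)
      assume "\<not> (q dvd m \<or> [m = x] (mod q))"
      then have "[p = 2 * p] (mod q)"
        using m_p[OF q(1) \<open>q dvd s\<close>] m_2p[OF q(1) \<open>q dvd s\<close>] by (meson cong_sym_eq cong_trans)
      then have "q dvd p"
        by (metis cong_0_iff cong_add_rcancel_0_nat cong_sym mult_2)
      then show False
        using \<open>\<not> q dvd p\<close> by blast
    qed
  qed
  then show "m \<in> kirch closure_of progression x b"
    unfolding closure_of_progression[OF assms(2)] using \<open>0 < m\<close> by blast
qed

lemma kirch_nbhd_closure_refinement:
  assumes "U \<in> kirch_nbhds x" "p dvd x"
  obtains V W where "V \<in> kirch_nbhds p" "W \<in> kirch_nbhds (2 * p)"
    "kirch closure_of V \<inter> kirch closure_of W \<subseteq> kirch closure_of U"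
proof -
  obtain b where b: "0 < x" "0 < b" "squarefree b" "coprime x b" "progression x b \<subseteq> U"
    using assms(1) by (rule kirch_nbhdsE)
  have "b \<noteq> 0" "\<not> is_unit (2 :: nat)"
    using b(2) by simp_all
  then obtain s where s: "b = 2 ^ multiplicity 2 b * s" "odd s"
    by (rule multiplicity_decompose')
  have "0 < p"
    using b(1) assms(2) by (simp add: dvd_pos_nat)
  have "0 < s"
    using \<open>b \<noteq> 0\<close> s(1) by (metis gr0I mult_0_right)
  have "squarefree s"
    using b(3) s(1) squarefree_mono by (metis dvd_triv_right)
  have "coprime p s"
    using b(4) assms(2) s(1) by (metis coprime_mult_left_iff coprime_mult_right_iff dvdE)
  then have "coprime (2 * p) s"
    using s(2) by simp
  then have "progression p s \<in> kirch_nbhds p" "progression (2 * p) s \<in> kirch_nbhds (2 * p)"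
    using \<open>0 < p\<close> \<open>0 < s\<close> \<open>squarefree s\<close> \<open>coprime p s\<close> by (auto intro: progression_in_kirch_nbhds)
  moreover have "kirch closure_of progression x b \<subseteq> kirch closure_of U"
    using b(5) by (rule closure_of_mono)
  ultimately show ?thesis
    using that closure_of_progression_odd_part_inter_subset[OF s(1) b(2,4) assms(2)] by blast
qed

lemma kirchF_subset_if_closure_refinement:
  assumes "a \<noteq> b" "y \<noteq> a" "y \<noteq> b"
    and refine: "\<And>U. U \<in> kirch_nbhds x \<Longrightarrow> \<exists>V W. V \<in> kirch_nbhds a \<and> W \<in> kirch_nbhds b \<and>
      kirch closure_of V \<inter> kirch closure_of W \<subseteq> kirch closure_of U"
  shows "kirchF {y, x} \<subseteq> kirchF {y, a, b}"
proof
  fix B assume "B \<in> kirchF {y, x}"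
  then obtain U where B: "B \<subseteq> {1..}" "U y \<in> kirch_nbhds y" "U x \<in> kirch_nbhds x"
    "kirch closure_of (U y) \<inter> kirch closure_of (U x) \<subseteq> B"
    unfolding kirchF_def by auto
  obtain V W where VW: "V \<in> kirch_nbhds a" "W \<in> kirch_nbhds b"
    "kirch closure_of V \<inter> kirch closure_of W \<subseteq> kirch closure_of (U x)"
    using refine[OF B(3)] by blast
  define U' where "U' = (\<lambda>z. if z = a then V else if z = b then W else U y)"
  have "\<forall>z\<in>{y, a, b}. U' z \<in> kirch_nbhds z"
    using assms(1-3) B(2) VW(1,2) by (simp add: U'_def)
  moreover have "(\<Inter>z\<in>{y, a, b}. kirch closure_of (U' z)) \<subseteq> B"
    using assms(1-3) B(4) VW(3) by (auto simp: U'_def)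
  ultimately show "B \<in> kirchF {y, a, b}"
    unfolding kirchF_def using B(1) by blast
qed

lemma kirchF_subset_if_dvd:
  assumes "0 < p" "p dvd x" "y \<noteq> p" "y \<noteq> 2 * p"
  shows "kirchF {y, x} \<subseteq> kirchF {y, p, 2 * p}"
proof (rule kirchF_subset_if_closure_refinement)
  fix U assume "U \<in> kirch_nbhds x"
  then obtain V W where "V \<in> kirch_nbhds p" "W \<in> kirch_nbhds (2 * p)"
    "kirch closure_of V \<inter> kirch closure_of W \<subseteq> kirch closure_of U"
    using assms(2) by (rule kirch_nbhd_closure_refinement)
  then show "\<exists>V W. V \<in> kirch_nbhds p \<and> W \<in> kirch_nbhds (2 * p) \<and>
      kirch closure_of V \<inter> kirch closure_of W \<subseteq> kirch closure_of U"
    by blast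
qed (use assms in auto)

lemma closure_of_kirch_nbhd_multiples:
  assumes "U \<in> kirch_nbhds a"
  obtains b where "0 < b" "coprime a b" "{m. 0 < m \<and> b dvd m} \<subseteq> kirch closure_of U"
proof -
  obtain b where b: "0 < a" "0 < b" "squarefree b" "coprime a b" "progression a b \<subseteq> U"
    using assms by (rule kirch_nbhdsE)
  have "{m. 0 < m \<and> b dvd m} \<subseteq> kirch closure_of progression a b"
    by (auto simp: closure_of_progression[OF b(2)] intro: dvd_trans)
  also have "\<dots> \<subseteq> kirch closure_of U"
    using b(5) by (rule closure_of_mono)
  finally show ?thesis
    using that b(2,4) by blast
qed

lemma closure_of_kirch_nbhd_residue_class:
  assumes "U \<in> kirch_nbhds a" "prime p"
  obtains c where "0 < c" "\<not> p dvd c"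
    "{m. 0 < m \<and> c dvd m \<and> [m = a] (mod p)} \<subseteq> kirch closure_of U"
proof -
  obtain b where b: "0 < a" "0 < b" "squarefree b" "coprime a b" "progression a b \<subseteq> U"
    using assms(1) by (rule kirch_nbhdsE)
  have "b \<noteq> 0" "\<not> is_unit p"
    using b(2) assms(2) not_prime_unit by auto
  then obtain c where c: "b = p ^ multiplicity p b * c" "\<not> p dvd c"
    by (rule multiplicity_decompose')
  have "0 < c"
    using \<open>b \<noteq> 0\<close> c(1) by (metis gr0I mult_0_right)
  have "m \<in> kirch closure_of progression a b" if m: "0 < m" "c dvd m" "[m = a] (mod p)" for m
  proof -
    have "q dvd m \<or> [m = a] (mod q)" if q: "prime q" "q dvd b" for q
    proof (cases "q = p")
      case True
      then show ?thesis
        using m(3) by simp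
    next
      case False
      have "q dvd p ^ multiplicity p b * c"
        using q(2) by (subst (asm) c(1))
      moreover have "\<not> q dvd p ^ multiplicity p b"
        using False q(1) assms(2) prime_dvd_power_nat primes_dvd_imp_eq by blast
      ultimately have "q dvd c"
        using q(1) prime_dvd_mult_iff by blast
      then show ?thesis
        using m(2) by (meson dvd_trans)
    qed
    then show ?thesis
      unfolding closure_of_progression[OF b(2)] using m(1) by blast
  qed
  then have "{m. 0 < m \<and> c dvd m \<and> [m = a] (mod p)} \<subseteq> kirch closure_of progression a b"
    by blast
  also have "\<dots> \<subseteq> kirch closure_of U"
    using b(5) by (rule closure_of_mono)
  finally show ?thesis
    using that \<open>0 < c\<close> c(2) by blast
qed

lemma kirch_nbhds_closures_common_point:
  assumes "prime p" "\<not> p dvd a"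
    and "U \<in> kirch_nbhds a" "V \<in> kirch_nbhds p" "W \<in> kirch_nbhds (2 * p)"
  obtains m where "m \<in> kirch closure_of U" "m \<in> kirch closure_of V" "m \<in> kirch closure_of W"
    "[m = a] (mod p)" "\<not> p dvd m"
proof -
  obtain c where c: "0 < c" "\<not> p dvd c"
    "{m. 0 < m \<and> c dvd m \<and> [m = a] (mod p)} \<subseteq> kirch closure_of U"
    using assms(3,1) by (rule closure_of_kirch_nbhd_residue_class)
  obtain d where d: "0 < d" "coprime p d" "{m. 0 < m \<and> d dvd m} \<subseteq> kirch closure_of V"
    using assms(4) by (rule closure_of_kirch_nbhd_multiples)
  obtain e where e: "0 < e" "coprime (2 * p) e" "{m. 0 < m \<and> e dvd m} \<subseteq> kirch closure_of W"
    using assms(5) by (rule closure_of_kirch_nbhd_multiples)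
  have "0 < a"
    using assms(3) by (rule kirch_nbhdsE)
  define R where "R = c * d * e"
  have "\<not> p dvd d" "\<not> p dvd e"
    using d(2) e(2) assms(1) coprime_common_divisor not_prime_unit by (metis dvd_refl, metis dvd_triv_right)
  then have "\<not> p dvd R"
    using c(2) assms(1) by (simp add: R_def prime_dvd_mult_iff)
  \<comment> \<open>Fermat makes \<open>a * R ^ (p - 1)\<close> congruent to \<open>a\<close> modulo \<open>p\<close>; it stays divisible by \<open>c\<close>, \<open>d\<close>, \<open>e\<close>.\<close>
  define m where "m = a * R ^ (p - 1)"
  have "0 < m"
    using \<open>0 < a\<close> c(1) d(1) e(1) by (simp add: m_def R_def)
  have "R dvd m"
    using prime_gt_1_nat[OF assms(1)] by (simp add: m_def)
  then have "c dvd m" "d dvd m" "e dvd m"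
    unfolding R_def by (meson dvd_mult_left dvd_mult_right dvd_trans)+
  have "[m = a * 1] (mod p)"
    unfolding m_def using fermat_theorem[OF assms(1) \<open>\<not> p dvd R\<close>] by (rule cong_scalar_left)
  then have "[m = a] (mod p)"
    by simp
  moreover have "\<not> p dvd m"
    using cong_dvd_iff[OF \<open>[m = a] (mod p)\<close>] assms(2) by simp
  moreover have "m \<in> kirch closure_of U" "m \<in> kirch closure_of V" "m \<in> kirch closure_of W"
    using c(3) d(3) e(3) \<open>0 < m\<close> \<open>c dvd m\<close> \<open>d dvd m\<close> \<open>e dvd m\<close> \<open>[m = a] (mod p)\<close> by blast+
  ultimately show ?thesis
    using that by blast
qed

lemma closure_of_kirch_nbhd_mem_kirchF:
  assumes "U \<in> kirch_nbhds x" "0 < a"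
  shows "kirch closure_of U \<in> kirchF {a, x}"
proof -
  define U' where "U' = (\<lambda>z. if z = x then U else topspace kirch)"
  have "topspace kirch \<in> kirch_nbhds a"
    using assms(2) topspace_kirch openin_topspace[of kirch] by (simp add: kirch_nbhds_def)
  then have "\<forall>z\<in>{a, x}. U' z \<in> kirch_nbhds z"
    using assms(1) by (simp add: U'_def)
  moreover have "(\<Inter>z\<in>{a, x}. kirch closure_of (U' z)) \<subseteq> kirch closure_of U"
    using INF_lower[of x "{a, x}" "\<lambda>z. kirch closure_of (U' z)"] by (simp add: U'_def)
  moreover have "kirch closure_of U \<subseteq> {1..}"
    by (metis closure_of_subset_topspace topspace_kirch)
  ultimately show ?thesis
    unfolding kirchF_def by blast
qed

lemma kirchF_subset_imp_cong:
  assumes "prime p" "0 < a" "\<not> p dvd a" "\<not> p dvd x"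
    and subset: "kirchF {a, x} \<subseteq> kirchF {a, p, 2 * p}"
  shows "[x = a] (mod p)"
proof -
  define X where "X = progression x p"
  have "0 < x"
    using assms(4) by (metis dvd_0_right gr0I)
  then have "X \<in> kirch_nbhds x"
    unfolding X_def using assms(1,4) prime_imp_coprime[of p x]
    by (intro progression_in_kirch_nbhds) (auto simp: prime_gt_0_nat squarefree_prime coprime_commute)
  then have "kirch closure_of X \<in> kirchF {a, x}"
    using assms(2) by (rule closure_of_kirch_nbhd_mem_kirchF)
  then have "kirch closure_of X \<in> kirchF {a, p, 2 * p}"
    using subset by blast
  then obtain U where U: "\<forall>z\<in>{a, p, 2 * p}. U z \<in> kirch_nbhds z"
    "(\<Inter>z\<in>{a, p, 2 * p}. kirch closure_of (U z)) \<subseteq> kirch closure_of X"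
    unfolding kirchF_def mem_Collect_eq by blast
  have "U a \<in> kirch_nbhds a" "U p \<in> kirch_nbhds p" "U (2 * p) \<in> kirch_nbhds (2 * p)"
    using U(1) by simp_all
  then obtain m where m: "m \<in> kirch closure_of (U a)" "m \<in> kirch closure_of (U p)"
    "m \<in> kirch closure_of (U (2 * p))" "[m = a] (mod p)" "\<not> p dvd m"
    by (rule kirch_nbhds_closures_common_point[OF assms(1,3)])
  then have "m \<in> kirch closure_of X"
    using U(2) by auto
  then have "\<forall>q. prime q \<longrightarrow> q dvd p \<longrightarrow> q dvd m \<or> [m = x] (mod q)"
    unfolding X_def closure_of_progression[OF prime_gt_0_nat[OF assms(1)]] by blast
  then have "p dvd m \<or> [m = x] (mod p)"
    using assms(1) by simp
  then have "[m = x] (mod p)"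
    using m(5) by simp
  then show ?thesis
    using m(4) by (meson cong_sym cong_trans)
qed

theorem lemma3p15:
  fixes x p :: nat
  assumes "x \<ge> 3" and "prime p" and "odd p"
  shows "p dvd x \<longleftrightarrow>
    (kirchF {1, x} \<subseteq> kirchF {1, p, 2 * p} \<and> kirchF {2, x} \<subseteq> kirchF {2, p, 2 * p})"
proof -
  have "3 \<le> p"
    using prime_ge_2_nat[OF assms(2)] assms(3) by (cases "p = 2") auto
  then have "\<not> p dvd 1" "\<not> p dvd 2"
    by (auto dest: dvd_imp_le)
  show ?thesis
  proof
    assume "p dvd x"
    then show "kirchF {1, x} \<subseteq> kirchF {1, p, 2 * p} \<and> kirchF {2, x} \<subseteq> kirchF {2, p, 2 * p}"
      using \<open>3 \<le> p\<close> by (simp add: kirchF_subset_if_dvd)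
  next
    assume subsets: "kirchF {1, x} \<subseteq> kirchF {1, p, 2 * p} \<and> kirchF {2, x} \<subseteq> kirchF {2, p, 2 * p}"
    show "p dvd x"
    proof (rule ccontr)
      assume "\<not> p dvd x"
      then have "[x = 1] (mod p)" "[x = 2] (mod p)"
        using subsets assms(2) \<open>\<not> p dvd 1\<close> \<open>\<not> p dvd 2\<close> by (simp_all add: kirchF_subset_imp_cong)
      then have "[1 = 2] (mod p)"
        by (meson cong_sym cong_trans)
      then show False
        using \<open>3 \<le> p\<close> by (simp add: cong_def)
    qed
  qed
qed

end
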